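(* Let $\mathcal{T}$ be a single-elimination tournament. Then: (i) every $u\in V(\mathcal{T})$ has $P(u)\ne\emptyset$; (ii) for all $u,v\in V(\mathcal{T})$, $P(u)=P(v)$ if and only if $u=v$; (iii) for $u,v\in V(\mathcal{T})$, $P(u)\subseteq P(v)$ if and only if there exists a directed walk from $u$ to $v$; (iv) for all distinct $u,v\in V(\mathcal{T})$, either $P(u)\cap P(v)=\emptyset$, or $P(u)\subsetneq P(v)$, or $P(v)\subsetneq P(u)$; (v) for every match $x\in M(\mathcal{T})$, the sets $\{P(u):u\in N^-(x)\}$ partition $P(x)$, and $P(u)\subsetneq P(x)$ and $P(u)\ne\emptyset$ for all $u\in N^-(x)$.
   Context: A single-elimination tournament is a finite directed graph $\mathcal{T}$ such that: (a) $\mathcal{T}$ has exactly one sink (vertex with no out-neighbours); (b) every non-sink vertex has exactly one out-neighbour; (c) $\mathcal{T}$ has no directed cycles; (d) $|N^-(v)|\ne 1$ for every vertex $v$, where $N^-(v)$ (resp. $N^+(v)$) denotes the set of in-neighbours (resp. out-neighbours) of $v$. The players $P(\mathcal{T})$ are the sources (vertices with no in-neighbours) and the matches are $M(\mathcal{T})=V(\mathcal{T})\setminus P(\mathcal{T})$. A directed walk from $u$ to $v$ is a sequence $(u_1,\dots,u_t)$, $t\ge1$, with $u_1=u$, $u_t=v$ and $u_{i+1}\in N^+(u_i)$ for $1\le i<t$. For a vertex $u$, $P(u)$ is the set of players $a$ for which there is a directed walk from $a$ to $u$. *)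

theory Defs
  imports Main "HOL-Library.Disjoint_Sets"
begin

definition out_nbrs :: "('a \<times> 'a) set \<Rightarrow> 'a \<Rightarrow> 'a set" where
  "out_nbrs E v = {w. (v, w) \<in> E}"

definition in_nbrs :: "('a \<times> 'a) set \<Rightarrow> 'a \<Rightarrow> 'a set" where
  "in_nbrs E v = {u. (u, v) \<in> E}"

definition sinks :: "'a set \<Rightarrow> ('a \<times> 'a) set \<Rightarrow> 'a set" where
  "sinks V E = {v \<in> V. out_nbrs E v = {}}"

definition players :: "'a set \<Rightarrow> ('a \<times> 'a) set \<Rightarrow> 'a set" where
  "players V E = {v \<in> V. in_nbrs E v = {}}"

definition matches :: "'a set \<Rightarrow> ('a \<times> 'a) set \<Rightarrow> 'a set" where
  "matches V E = V - players V E"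

definition dwalk :: "'a set \<Rightarrow> ('a \<times> 'a) set \<Rightarrow> 'a \<Rightarrow> 'a \<Rightarrow> 'a list \<Rightarrow> bool" where
  "dwalk V E u v xs \<longleftrightarrow> xs \<noteq> [] \<and> set xs \<subseteq> V \<and> hd xs = u \<and> last xs = v \<and>
     (\<forall>i. i + 1 < length xs \<longrightarrow> (xs ! i, xs ! (i + 1)) \<in> E)"

definition has_dwalk :: "'a set \<Rightarrow> ('a \<times> 'a) set \<Rightarrow> 'a \<Rightarrow> 'a \<Rightarrow> bool" where
  "has_dwalk V E u v \<longleftrightarrow> (\<exists>xs. dwalk V E u v xs)"

definition Pl :: "'a set \<Rightarrow> ('a \<times> 'a) set \<Rightarrow> 'a \<Rightarrow> 'a set" where
  "Pl V E u = {a \<in> players V E. has_dwalk V E a u}"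

definition single_elim_tournament :: "'a set \<Rightarrow> ('a \<times> 'a) set \<Rightarrow> bool" where
  "single_elim_tournament V E \<longleftrightarrow>
     finite V \<and> E \<subseteq> V \<times> V \<and>
     card (sinks V E) = 1 \<and>
     (\<forall>v \<in> V - sinks V E. card (out_nbrs E v) = 1) \<and>
     acyclic E \<and>
     (\<forall>v \<in> V. card (in_nbrs E v) \<noteq> 1)"

end

theory Submission
  imports Defs
begin

text \<open>Since every vertex has at most one out-neighbour, the vertices reachable from a player
  form a chain; so two vertices sharing a player are comparable under reachability, and
  (by acyclicity) two in-neighbours of the same vertex share no player. As no vertex has
  in-degree one, every edge \<open>v \<rightarrow> w\<close> has a sibling edge \<open>v' \<rightarrow> w\<close> bringing players
  that \<open>v\<close> lacks, so player sets grow strictly along walks. Well-foundedness of the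
  finite acyclic graph gives every vertex a player below it.\<close>

lemma dwalk_Cons_Cons:
  "dwalk V E u v (u # w # xs) \<longleftrightarrow> u \<in> V \<and> (u, w) \<in> E \<and> dwalk V E w v (w # xs)"
  unfolding dwalk_def by (auto simp: All_less_Suc2)

lemma dwalk_imp_rtrancl: "dwalk V E u v xs \<Longrightarrow> (u, v) \<in> E\<^sup>*"
proof (induction xs arbitrary: u rule: induct_list012)
  case 1
  then show ?case by (simp add: dwalk_def)
next
  case (2 x)
  then show ?case by (auto simp: dwalk_def)
next
  case (3 x y zs)
  then have "x = u" by (simp add: dwalk_def)
  with "3.prems" have "(u, y) \<in> E" and "dwalk V E y v (y # zs)"
    by (simp_all add: dwalk_Cons_Cons)
  with "3.IH"(2) show ?case by (meson converse_rtrancl_into_rtrancl)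
qed

lemma rtrancl_imp_dwalk:
  assumes "(u, v) \<in> E\<^sup>*" and "E \<subseteq> V \<times> V" and "u \<in> V"
  shows "\<exists>xs. dwalk V E u v xs"
  using assms(1,3)
proof (induction rule: converse_rtrancl_induct)
  case base
  have "dwalk V E v v [v]" using base by (simp add: dwalk_def)
  then show ?case by blast
next
  case (step y z)
  with assms(2) obtain xs where "dwalk V E z v xs" by blast
  then have "dwalk V E z v (z # tl xs)" by (cases xs) (auto simp: dwalk_def)
  with step have "dwalk V E y v (y # z # tl xs)" by (simp add: dwalk_Cons_Cons)
  then show ?case by blast
qed

lemma has_dwalk_iff_rtrancl:
  assumes "E \<subseteq> V \<times> V"
  shows "has_dwalk V E u v \<longleftrightarrow> u \<in> V \<and> (u, v) \<in> E\<^sup>*"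
proof
  assume "has_dwalk V E u v"
  then obtain xs where xs: "dwalk V E u v xs" by (auto simp: has_dwalk_def)
  then have "u \<in> V" by (metis dwalk_def hd_in_set subsetD)
  with dwalk_imp_rtrancl[OF xs] show "u \<in> V \<and> (u, v) \<in> E\<^sup>*" by simp
next
  assume "u \<in> V \<and> (u, v) \<in> E\<^sup>*"
  then show "has_dwalk V E u v" using rtrancl_imp_dwalk[OF _ assms] by (auto simp: has_dwalk_def)
qed

locale single_elimination =
  fixes V :: "'a set" and E :: "('a \<times> 'a) set"
  assumes single_elim_tournament: "single_elim_tournament V E"
begin

lemma finite_vertices: "finite V"
  and edges_subset: "E \<subseteq> V \<times> V"
  and acyclic_edges: "acyclic E"
  and in_degree_neq_1: "v \<in> V \<Longrightarrow> card (in_nbrs E v) \<noteq> 1"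
  and out_degree_eq_1: "v \<in> V - sinks V E \<Longrightarrow> card (out_nbrs E v) = 1"
  using single_elim_tournament by (auto simp: single_elim_tournament_def)

lemma single_valued_edges: "single_valued E"
proof (rule single_valuedI)
  fix x y z assume xy: "(x, y) \<in> E" and xz: "(x, z) \<in> E"
  then have "x \<in> V - sinks V E" using edges_subset by (auto simp: sinks_def out_nbrs_def)
  then obtain w where "out_nbrs E x = {w}" using out_degree_eq_1 by (meson card_1_singletonE)
  moreover have "y \<in> out_nbrs E x" and "z \<in> out_nbrs E x"
    using xy xz by (simp_all add: out_nbrs_def)
  ultimately show "y = z" by simp
qed

lemma wf_edges: "wf E"
  using finite_acyclic_wf finite_subset[OF edges_subset] finite_vertices acyclic_edges by blast

lemma Pl_eq_rtrancl: "Pl V E u = {a \<in> players V E. (a, u) \<in> E\<^sup>*}"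
  using has_dwalk_iff_rtrancl[OF edges_subset] by (auto simp: Pl_def players_def)

lemma Pl_mono: "(u, v) \<in> E\<^sup>* \<Longrightarrow> Pl V E u \<subseteq> Pl V E v"
  unfolding Pl_eq_rtrancl by auto

lemma Pl_nonempty:
  assumes "u \<in> V"
  shows "Pl V E u \<noteq> {}"
proof -
  obtain a where au: "(a, u) \<in> E\<^sup>*" and minimal: "\<And>b. (b, a) \<in> E \<Longrightarrow> (b, u) \<notin> E\<^sup>*"
    using wfE_min[OF wf_edges, of u "{a. (a, u) \<in> E\<^sup>*}"] by auto
  have "in_nbrs E a = {}"
    using minimal au by (auto simp: in_nbrs_def intro: converse_rtrancl_into_rtrancl)
  moreover have "a \<in> V" using au assms edges_subset by (auto elim: converse_rtranclE)
  ultimately show ?thesis using au unfolding Pl_eq_rtrancl players_def by auto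
qed

lemma in_nbrs_rtrancl_eq:
  assumes "u \<in> in_nbrs E x" and "u' \<in> in_nbrs E x" and "(u, u') \<in> E\<^sup>*"
  shows "u = u'"
proof (rule ccontr)
  assume "u \<noteq> u'"
  with assms(3) obtain y where "(u, y) \<in> E" and "(y, u') \<in> E\<^sup>*"
    by (metis converse_rtranclE)
  moreover have "(u, x) \<in> E" and "(u', x) \<in> E" using assms(1,2) by (simp_all add: in_nbrs_def)
  ultimately have "(x, x) \<in> E\<^sup>+"
    using single_valued_edges by (metis single_valuedD rtrancl_into_trancl1)
  with acyclic_edges show False by (simp add: acyclic_def)
qed

lemma Pl_common_rtrancl:
  assumes "a \<in> Pl V E u" and "a \<in> Pl V E v"
  shows "(u, v) \<in> E\<^sup>* \<or> (v, u) \<in> E\<^sup>*"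
  using assms single_valued_confluent[OF single_valued_edges] by (auto simp: Pl_eq_rtrancl)

lemma Pl_in_nbrs_disjoint:
  assumes "u \<in> in_nbrs E x" and "u' \<in> in_nbrs E x" and "u \<noteq> u'"
  shows "Pl V E u \<inter> Pl V E u' = {}"
  using assms Pl_common_rtrancl in_nbrs_rtrancl_eq by blast

text \<open>Here in-degree \<open>\<noteq> 1\<close> is essential: if \<open>v \<rightarrow> w \<rightarrow>\<^sup>* u\<close>, then \<open>w\<close> has a second
  in-neighbour \<open>v'\<close>, whose players reach \<open>u\<close> but not \<open>v\<close>.\<close>

lemma Pl_not_subset_if_trancl:
  assumes "(v, u) \<in> E\<^sup>+"
  shows "\<not> Pl V E u \<subseteq> Pl V E v"
proof
  assume subset: "Pl V E u \<subseteq> Pl V E v"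
  obtain w where vw: "(v, w) \<in> E" and wu: "(w, u) \<in> E\<^sup>*" using assms by (meson tranclD)
  then have "w \<in> V" using edges_subset by auto
  have "v \<in> in_nbrs E w" using vw by (simp add: in_nbrs_def)
  moreover have "in_nbrs E w \<noteq> {v}" using in_degree_neq_1[OF \<open>w \<in> V\<close>] by auto
  ultimately obtain v' where v': "v' \<in> in_nbrs E w" "v' \<noteq> v" by blast
  then have v'w: "(v', w) \<in> E" by (simp add: in_nbrs_def)
  then have "Pl V E v' \<noteq> {}" using Pl_nonempty edges_subset by blast
  moreover have "Pl V E v' \<subseteq> Pl V E u" using Pl_mono v'w wu by (meson converse_rtrancl_into_rtrancl)
  moreover have "Pl V E v' \<inter> Pl V E v = {}"
    using Pl_in_nbrs_disjoint v' \<open>v \<in> in_nbrs E w\<close> by blast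
  ultimately show False using subset by blast
qed

lemma Pl_subset_iff:
  assumes "u \<in> V"
  shows "Pl V E u \<subseteq> Pl V E v \<longleftrightarrow> (u, v) \<in> E\<^sup>*"
proof
  assume subset: "Pl V E u \<subseteq> Pl V E v"
  obtain a where "a \<in> Pl V E u" using Pl_nonempty assms by blast
  with subset have "(u, v) \<in> E\<^sup>* \<or> (v, u) \<in> E\<^sup>*" using Pl_common_rtrancl by blast
  then show "(u, v) \<in> E\<^sup>*"
    using Pl_not_subset_if_trancl subset by (auto simp: rtrancl_eq_or_trancl)
qed (rule Pl_mono)

lemma Pl_eq_iff:
  assumes "u \<in> V" and "v \<in> V"
  shows "Pl V E u = Pl V E v \<longleftrightarrow> u = v"
proof
  assume "Pl V E u = Pl V E v"
  then have "(u, v) \<in> E\<^sup>*" and "(v, u) \<in> E\<^sup>*" using Pl_subset_iff assms by blast+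
  then show "u = v" using antisymD[OF acyclic_impl_antisym_rtrancl[OF acyclic_edges]] by blast
qed simp

lemma Pl_psubset_iff:
  assumes "u \<in> V" and "v \<in> V"
  shows "Pl V E u \<subset> Pl V E v \<longleftrightarrow> (u, v) \<in> E\<^sup>+"
  using Pl_subset_iff Pl_eq_iff assms acyclic_edges
  by (auto simp: psubset_eq rtrancl_eq_or_trancl acyclic_def)

lemma Pl_laminar:
  assumes "u \<in> V" and "v \<in> V" and "u \<noteq> v"
  shows "Pl V E u \<inter> Pl V E v = {} \<or> Pl V E u \<subset> Pl V E v \<or> Pl V E v \<subset> Pl V E u"
proof (cases "Pl V E u \<inter> Pl V E v = {}")
  case False
  then have "(u, v) \<in> E\<^sup>* \<or> (v, u) \<in> E\<^sup>*" using Pl_common_rtrancl by blast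
  with assms(3) have "(u, v) \<in> E\<^sup>+ \<or> (v, u) \<in> E\<^sup>+" by (auto simp: rtrancl_eq_or_trancl)
  then show ?thesis using Pl_psubset_iff assms(1,2) by blast
qed simp

lemma Pl_match_eq_Union:
  assumes "x \<in> matches V E"
  shows "Pl V E x = \<Union>(Pl V E ` in_nbrs E x)"
proof
  show "\<Union>(Pl V E ` in_nbrs E x) \<subseteq> Pl V E x"
    using Pl_mono by (auto simp: in_nbrs_def)
  show "Pl V E x \<subseteq> \<Union>(Pl V E ` in_nbrs E x)"
  proof
    fix a assume a: "a \<in> Pl V E x"
    then have "(a, x) \<in> E\<^sup>*" and player: "a \<in> players V E" by (auto simp: Pl_eq_rtrancl)
    moreover have "a \<noteq> x" using player assms by (auto simp: matches_def)
    ultimately obtain u where "(a, u) \<in> E\<^sup>*" and "(u, x) \<in> E" by (metis rtranclE)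
    with player show "a \<in> \<Union>(Pl V E ` in_nbrs E x)" by (auto simp: Pl_eq_rtrancl in_nbrs_def)
  qed
qed

lemma partition_on_Pl_in_nbrs:
  assumes "x \<in> matches V E"
  shows "partition_on (Pl V E x) (Pl V E ` in_nbrs E x)"
proof (rule partition_onI)
  show "\<Union>(Pl V E ` in_nbrs E x) = Pl V E x" using Pl_match_eq_Union[OF assms] by simp
  show "{} \<notin> Pl V E ` in_nbrs E x"
    using Pl_nonempty edges_subset by (fastforce simp: in_nbrs_def)
  show "disjnt A B" if "A \<in> Pl V E ` in_nbrs E x" "B \<in> Pl V E ` in_nbrs E x" "A \<noteq> B" for A B
    using that Pl_in_nbrs_disjoint by (auto simp: disjnt_def)
qed

end

theorem proposition3p3:
  assumes T: "single_elim_tournament V E"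
  shows "(\<forall>u \<in> V. Pl V E u \<noteq> {})
       \<and> (\<forall>u \<in> V. \<forall>v \<in> V. Pl V E u = Pl V E v \<longleftrightarrow> u = v)
       \<and> (\<forall>u \<in> V. \<forall>v \<in> V. Pl V E u \<subseteq> Pl V E v \<longleftrightarrow> has_dwalk V E u v)
       \<and> (\<forall>u \<in> V. \<forall>v \<in> V. u \<noteq> v \<longrightarrow>
            Pl V E u \<inter> Pl V E v = {} \<or> Pl V E u \<subset> Pl V E v \<or> Pl V E v \<subset> Pl V E u)
       \<and> (\<forall>x \<in> matches V E.
            partition_on (Pl V E x) (Pl V E ` in_nbrs E x)
            \<and> (\<forall>u \<in> in_nbrs E x. Pl V E u \<subset> Pl V E x \<and> Pl V E u \<noteq> {}))"
proof -
  interpret single_elimination V E using T by unfold_locales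
  have in_nbr_psubset: "Pl V E u \<subset> Pl V E x \<and> Pl V E u \<noteq> {}" if "u \<in> in_nbrs E x" for u x
  proof -
    from that have "(u, x) \<in> E" by (simp add: in_nbrs_def)
    with edges_subset have "u \<in> V" "x \<in> V" by auto
    with \<open>(u, x) \<in> E\<close> show ?thesis using Pl_psubset_iff Pl_nonempty by blast
  qed
  have "Pl V E u \<subseteq> Pl V E v \<longleftrightarrow> has_dwalk V E u v" if "u \<in> V" for u v
    using Pl_subset_iff has_dwalk_iff_rtrancl[OF edges_subset] that by simp
  then show ?thesis
    using Pl_nonempty Pl_eq_iff Pl_laminar partition_on_Pl_in_nbrs in_nbr_psubset by simp
qed

end
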